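(* Let $I\subset S=K[x_1,\dots,x_t]$ be a nonzero proper monomial ideal. Then there exist positive integers $n_0$ and $d$ such that $v(I^{n+1})\le n\,\alpha(I)+d$ for all $n\ge n_0$.
   Context: $K$ is a field and $S$ is standard graded. For a proper graded ideal $J$, the $v$-number is $v(J)=\min\{k\ge 0 : \exists f\in S_k,\ \mathcal P\in\operatorname{Ass}(S/J) \text{ with } (J:f)=\mathcal P\}$. For a nonzero graded ideal $I$, $\alpha(I)=\min\{\deg f : f\in I\setminus\{0\} \text{ homogeneous}\}$. *)

theory Defs
  imports "HOL-Library.Poly_Mapping"
begin

text \<open>Polynomial ring S = K[x_i : i in 'n] over a field K, with a finite type 'n of variables
  (t = CARD('n)). A polynomial is a finitely supported map from exponent vectors
  (monomials, 'n =>0 nat) to coefficients; multiplication is convolution.\<close>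

type_synonym ('n, 'a) mpoly = "('n \<Rightarrow>\<^sub>0 nat) \<Rightarrow>\<^sub>0 'a"

definition mono_deg :: "('n::finite \<Rightarrow>\<^sub>0 nat) \<Rightarrow> nat" where
  "mono_deg m = (\<Sum>i\<in>UNIV. Poly_Mapping.lookup m i)"

definition monomial_poly :: "('n::finite \<Rightarrow>\<^sub>0 nat) \<Rightarrow> ('n, 'a::field) mpoly" where
  "monomial_poly m = Poly_Mapping.single m 1"

text \<open>f is in S_k: homogeneous of degree k (0 is in every S_k).\<close>
definition homogeneous :: "nat \<Rightarrow> ('n::finite, 'a::field) mpoly \<Rightarrow> bool" where
  "homogeneous k f \<longleftrightarrow> (\<forall>m\<in>Poly_Mapping.keys f. mono_deg m = k)"

definition is_ideal :: "('n::finite, 'a::field) mpoly set \<Rightarrow> bool" where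
  "is_ideal I \<longleftrightarrow> 0 \<in> I \<and> (\<forall>a\<in>I. \<forall>b\<in>I. a + b \<in> I) \<and> (\<forall>a\<in>I. \<forall>r. r * a \<in> I)"

definition ideal_gen :: "('n::finite, 'a::field) mpoly set \<Rightarrow> ('n, 'a) mpoly set" where
  "ideal_gen G = \<Inter>{J. is_ideal J \<and> G \<subseteq> J}"

definition monomial_ideal :: "('n::finite, 'a::field) mpoly set \<Rightarrow> bool" where
  "monomial_ideal I \<longleftrightarrow> (\<exists>M. I = ideal_gen (monomial_poly ` M))"

fun ideal_pow :: "('n::finite, 'a::field) mpoly set \<Rightarrow> nat \<Rightarrow> ('n, 'a) mpoly set" where
  "ideal_pow I 0 = UNIV"
| "ideal_pow I (Suc n) = ideal_gen {a * b | a b. a \<in> I \<and> b \<in> ideal_pow I n}"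

definition colon :: "('n::finite, 'a::field) mpoly set \<Rightarrow> ('n, 'a) mpoly \<Rightarrow> ('n, 'a) mpoly set" where
  "colon J f = {g. g * f \<in> J}"

definition prime_ideal :: "('n::finite, 'a::field) mpoly set \<Rightarrow> bool" where
  "prime_ideal P \<longleftrightarrow> is_ideal P \<and> P \<noteq> UNIV \<and> (\<forall>a b. a * b \<in> P \<longrightarrow> a \<in> P \<or> b \<in> P)"

text \<open>Associated primes of S/J: primes of the form (J : g) = Ann(g + J).\<close>
definition Ass :: "('n::finite, 'a::field) mpoly set \<Rightarrow> ('n, 'a) mpoly set set" where
  "Ass J = {P. prime_ideal P \<and> (\<exists>g. P = colon J g)}"

definition v_number :: "('n::finite, 'a::field) mpoly set \<Rightarrow> nat" where
  "v_number J = (LEAST k. \<exists>f P. homogeneous k f \<and> P \<in> Ass J \<and> colon J f = P)"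

definition alpha :: "('n::finite, 'a::field) mpoly set \<Rightarrow> nat" where
  "alpha I = (LEAST d. \<exists>f. f \<in> I \<and> f \<noteq> 0 \<and> homogeneous d f)"

end

theory Submission
  imports Defs
begin

text \<open>Take a monomial \<open>g = x\<^sup>\<gamma>\<close> of degree \<open>\<alpha>(I)\<close> in \<open>I\<close>. The exponents \<open>u\<close>
  with \<open>x\<^sup>u g\<^sup>n \<in> I\<^sup>n\<^sup>+\<^sup>1\<close> for some \<open>n\<close> form a monoid ideal \<open>L\<close> of
  \<open>\<nat>\<^sup>t\<close>, and \<open>0 \<notin> L\<close> by counting degrees. Like every proper monomial ideal, \<open>L\<close>
  has an associated prime: there are \<open>h \<notin> L\<close> and a set \<open>A\<close> of variables with
  \<open>(L : x\<^sup>h) = (x\<^sub>i : i \<in> A)\<close>. Each of the finitely many \<open>x\<^sub>i x\<^sup>h\<close> lies in \<open>L\<close>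
  at some level \<open>n\<close>, hence at all larger levels, so for large \<open>n\<close> the colon ideal
  \<open>(I\<^sup>n\<^sup>+\<^sup>1 : x\<^sup>h g\<^sup>n)\<close> is the prime \<open>(x\<^sub>i : i \<in> A)\<close>, witnessed by a monomial
  of degree \<open>n \<alpha>(I) + |h|\<close>.\<close>

lemma is_ideal_ideal_gen: "is_ideal (ideal_gen G)"
  unfolding ideal_gen_def is_ideal_def by auto

lemma ideal_gen_superset: "G \<subseteq> ideal_gen G"
  unfolding ideal_gen_def by auto

lemma ideal_gen_least: "is_ideal J \<Longrightarrow> G \<subseteq> J \<Longrightarrow> ideal_gen G \<subseteq> J"
  unfolding ideal_gen_def by auto

lemma is_ideal_ideal_pow: "is_ideal (ideal_pow I k)"
  by (cases k) (simp_all add: is_ideal_ideal_gen, simp add: is_ideal_def)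

lemma mult_mem_ideal_pow_Suc: "a \<in> I \<Longrightarrow> b \<in> ideal_pow I n \<Longrightarrow> a * b \<in> ideal_pow I (Suc n)"
  using ideal_gen_superset by fastforce

lemma ideal_sum_mem:
  assumes "is_ideal J" and "\<And>x. x \<in> S \<Longrightarrow> f x \<in> J"
  shows "sum f S \<in> J"
  using assms(2)
  by (induction S rule: infinite_finite_induct) (use assms(1) in \<open>auto simp: is_ideal_def\<close>)

lemma monomial_poly_mult: "monomial_poly a * monomial_poly b = monomial_poly (a + b)"
  unfolding monomial_poly_def by (simp add: mult_single)

lemma monomial_poly_0: "monomial_poly 0 = 1"
  unfolding monomial_poly_def by simp

lemma keys_monomial_poly [simp]: "Poly_Mapping.keys (monomial_poly a :: ('n::finite, 'a::field) mpoly) = {a}"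
  unfolding monomial_poly_def by simp

lemma monomial_poly_nonzero: "monomial_poly a \<noteq> 0"
  using keys_monomial_poly[of a] by (metis empty_not_insert keys_zero)

lemma homogeneous_monomial_poly: "homogeneous (mono_deg a) (monomial_poly a)"
  unfolding homogeneous_def by simp

lemma mono_deg_add: "mono_deg (a + b) = mono_deg a + mono_deg b"
  unfolding mono_deg_def by (simp add: lookup_add sum.distrib)

lemma mono_deg_sum: "mono_deg (sum f S) = (\<Sum>x\<in>S. mono_deg (f x))"
  unfolding mono_deg_def lookup_sum by (rule sum.swap)

lemma mono_deg_single: "mono_deg (Poly_Mapping.single i k) = k"
proof -
  have "mono_deg (Poly_Mapping.single i k) = (\<Sum>j\<in>UNIV. if j = i then k else 0)"
    unfolding mono_deg_def by (rule sum.cong) (auto simp: lookup_single when_def)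
  then show ?thesis by simp
qed

lemma mono_deg_eq_0_iff: "mono_deg a = 0 \<longleftrightarrow> a = 0"
  unfolding mono_deg_def by (auto intro: poly_mapping_eqI)

lemma split_off_variable:
  fixes u :: "'n \<Rightarrow>\<^sub>0 nat"
  assumes "0 < Poly_Mapping.lookup u i"
  shows "u = Poly_Mapping.single i 1 + (u - Poly_Mapping.single i 1)"
  using assms by (intro poly_mapping_eqI) (auto simp: lookup_add lookup_minus lookup_single when_def)

lemma sum_single_lookup: "(\<Sum>k\<in>Poly_Mapping.keys p. Poly_Mapping.single k (Poly_Mapping.lookup p k)) = p"
proof (rule poly_mapping_eqI)
  show "Poly_Mapping.lookup (\<Sum>k\<in>Poly_Mapping.keys p. Poly_Mapping.single k (Poly_Mapping.lookup p k)) m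
      = Poly_Mapping.lookup p m" for m
    unfolding lookup_sum by (cases "m \<in> Poly_Mapping.keys p") (auto simp: lookup_single when_def in_keys_iff)
qed

lemma lookup_mult_unique_split:
  fixes a b :: "'k::cancel_comm_monoid_add \<Rightarrow>\<^sub>0 'r::semiring_0"
  assumes unique: "\<And>l q. l \<in> Poly_Mapping.keys a \<Longrightarrow> q \<in> Poly_Mapping.keys b \<Longrightarrow> l + q = a0 + b0 \<Longrightarrow> l = a0"
  shows "Poly_Mapping.lookup (a * b) (a0 + b0) = Poly_Mapping.lookup a a0 * Poly_Mapping.lookup b b0"
proof -
  have "Poly_Mapping.lookup a l * (\<Sum>q. Poly_Mapping.lookup b q when a0 + b0 = l + q)
      = (Poly_Mapping.lookup a a0 * Poly_Mapping.lookup b b0 when l = a0)" for l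
  proof (cases "l = a0")
    case True
    then have "(\<lambda>q. Poly_Mapping.lookup b q when a0 + b0 = l + q) = (\<lambda>q. Poly_Mapping.lookup b q when b0 = q)"
      by auto
    with True show ?thesis by simp
  next
    case False
    have "(Poly_Mapping.lookup b q when a0 + b0 = l + q) = 0" if "l \<in> Poly_Mapping.keys a" for q
      using unique[OF that, of q] False by (cases "q \<in> Poly_Mapping.keys b") (auto simp: in_keys_iff when_def dest: sym)
    with False show ?thesis by (cases "l \<in> Poly_Mapping.keys a") (auto simp: in_keys_iff)
  qed
  then show ?thesis
    unfolding lookup_mult by simp
qed

definition monomial_closed :: "('n::finite, 'a::field) mpoly set \<Rightarrow> bool" where
  "monomial_closed J \<longleftrightarrow> (\<forall>f\<in>J. \<forall>m\<in>Poly_Mapping.keys f. monomial_poly m \<in> J)"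

lemma is_ideal_monomials_in:
  assumes "is_ideal J"
  shows "is_ideal {f. \<forall>m\<in>Poly_Mapping.keys f. monomial_poly m \<in> J}" (is "is_ideal ?C")
  unfolding is_ideal_def
proof (intro conjI ballI allI)
  show "0 \<in> ?C" by simp
  show "a + b \<in> ?C" if "a \<in> ?C" "b \<in> ?C" for a b
    using that keys_add[of a b] by auto
  show "r * a \<in> ?C" if a: "a \<in> ?C" for a r
  proof (intro CollectI ballI)
    fix m assume "m \<in> Poly_Mapping.keys (r * a)"
    then obtain x y where "m = x + y" "y \<in> Poly_Mapping.keys a"
      using keys_mult by blast
    then have "monomial_poly m = monomial_poly x * monomial_poly y" "monomial_poly y \<in> J"
      using a by (auto simp: monomial_poly_mult)
    then show "monomial_poly m \<in> J"
      using assms unfolding is_ideal_def by metis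
  qed
qed

lemma mem_iff_monomials_mem:
  assumes "is_ideal J" and "monomial_closed J"
  shows "f \<in> J \<longleftrightarrow> (\<forall>m\<in>Poly_Mapping.keys f. monomial_poly m \<in> J)"
proof
  assume monomials: "\<forall>m\<in>Poly_Mapping.keys f. monomial_poly m \<in> J"
  have "Poly_Mapping.single m (Poly_Mapping.lookup f m) \<in> J" if "m \<in> Poly_Mapping.keys f" for m
  proof -
    have "Poly_Mapping.single m (Poly_Mapping.lookup f m)
        = Poly_Mapping.single 0 (Poly_Mapping.lookup f m) * monomial_poly m"
      by (simp add: monomial_poly_def mult_single)
    then show ?thesis
      using monomials that assms(1) unfolding is_ideal_def by auto
  qed
  then show "f \<in> J"
    using ideal_sum_mem[OF assms(1)] sum_single_lookup[of f] by metis
qed (use assms(2) monomial_closed_def in blast)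

lemma monomial_closed_ideal_gen:
  assumes "\<forall>g\<in>G. \<forall>m\<in>Poly_Mapping.keys g. monomial_poly m \<in> ideal_gen G"
  shows "monomial_closed (ideal_gen G)"
proof -
  have "ideal_gen G \<subseteq> {f. \<forall>m\<in>Poly_Mapping.keys f. monomial_poly m \<in> ideal_gen G}"
    using assms by (intro ideal_gen_least is_ideal_monomials_in is_ideal_ideal_gen) auto
  then show ?thesis
    unfolding monomial_closed_def by blast
qed

lemma is_ideal_monomial_ideal: "monomial_ideal I \<Longrightarrow> is_ideal I"
  unfolding monomial_ideal_def using is_ideal_ideal_gen by blast

lemma monomial_closed_monomial_ideal: "monomial_ideal I \<Longrightarrow> monomial_closed I"
  unfolding monomial_ideal_def
  using ideal_gen_superset by (fastforce intro!: monomial_closed_ideal_gen)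

lemma monomial_closed_ideal_pow:
  assumes "monomial_closed I"
  shows "monomial_closed (ideal_pow I k)"
proof (induction k)
  case 0
  then show ?case by (simp add: monomial_closed_def)
next
  case (Suc k)
  have "monomial_poly m \<in> ideal_pow I (Suc k)"
    if ab: "a \<in> I" "b \<in> ideal_pow I k" and "m \<in> Poly_Mapping.keys (a * b)" for a b m
  proof -
    obtain x y where "m = x + y" "x \<in> Poly_Mapping.keys a" "y \<in> Poly_Mapping.keys b"
      using \<open>m \<in> Poly_Mapping.keys (a * b)\<close> keys_mult by blast
    moreover have "monomial_poly x \<in> I" "monomial_poly y \<in> ideal_pow I k"
      using calculation(2,3) ab assms Suc.IH by (auto simp: monomial_closed_def)
    ultimately show ?thesis
      using mult_mem_ideal_pow_Suc by (fastforce simp: monomial_poly_mult)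
  qed
  then have "\<forall>g\<in>{a * b |a b. a \<in> I \<and> b \<in> ideal_pow I k}.
      \<forall>m\<in>Poly_Mapping.keys g. monomial_poly m \<in> ideal_pow I (Suc k)"
    by blast
  then show ?case
    unfolding ideal_pow.simps(2) by (rule monomial_closed_ideal_gen)
qed

lemma mult_monomial_mem_iff:
  assumes "is_ideal J" and "monomial_closed J"
  shows "q * monomial_poly c \<in> J \<longleftrightarrow> (\<forall>m\<in>Poly_Mapping.keys q. monomial_poly (m + c) \<in> J)"
proof -
  have lookup: "Poly_Mapping.lookup (q * monomial_poly c) (m + c) = Poly_Mapping.lookup q m" for m
    using lookup_mult_unique_split[of q "monomial_poly c" m c] by (simp add: monomial_poly_def)
  have "Poly_Mapping.keys (q * monomial_poly c) = (\<lambda>m. m + c) ` Poly_Mapping.keys q"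
  proof
    show "Poly_Mapping.keys (q * monomial_poly c) \<subseteq> (\<lambda>m. m + c) ` Poly_Mapping.keys q"
      using keys_mult[of q "monomial_poly c"] by auto
    show "(\<lambda>m. m + c) ` Poly_Mapping.keys q \<subseteq> Poly_Mapping.keys (q * monomial_poly c)"
      using lookup by (auto simp: in_keys_iff)
  qed
  then show ?thesis
    by (simp add: mem_iff_monomials_mem[OF assms, of "q * monomial_poly c"])
qed

lemma is_ideal_keys_deg_ge:
  "is_ideal {f :: ('n::finite, 'a::field) mpoly. \<forall>m\<in>Poly_Mapping.keys f. d \<le> mono_deg m}"
  (is "is_ideal ?D")
  unfolding is_ideal_def
proof (intro conjI ballI allI)
  show "0 \<in> ?D" by simp
  show "a + b \<in> ?D" if "a \<in> ?D" "b \<in> ?D" for a b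
    using that keys_add[of a b] by auto
  show "r * a \<in> ?D" if a: "a \<in> ?D" for a r
  proof (intro CollectI ballI)
    fix m assume "m \<in> Poly_Mapping.keys (r * a)"
    then obtain x y where "m = x + y" "y \<in> Poly_Mapping.keys a"
      using keys_mult by blast
    with a show "d \<le> mono_deg m"
      by (auto simp: mono_deg_add)
  qed
qed

lemma alpha_le: "monomial_poly a \<in> I \<Longrightarrow> alpha I \<le> mono_deg a"
  unfolding alpha_def by (rule Least_le) (use monomial_poly_nonzero homogeneous_monomial_poly in blast)

lemma mono_deg_ge_of_mem_ideal_pow:
  assumes "monomial_closed I" and "f \<in> ideal_pow I k" and "m \<in> Poly_Mapping.keys f"
  shows "k * alpha I \<le> mono_deg m"
  using assms(2,3)
proof (induction k arbitrary: f m)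
  case 0
  then show ?case by simp
next
  case (Suc k)
  have "a * b \<in> {f. \<forall>m\<in>Poly_Mapping.keys f. Suc k * alpha I \<le> mono_deg m}"
    if "a \<in> I" "b \<in> ideal_pow I k" for a b
  proof (intro CollectI ballI)
    fix m assume "m \<in> Poly_Mapping.keys (a * b)"
    then obtain x y where m: "m = x + y" "x \<in> Poly_Mapping.keys a" "y \<in> Poly_Mapping.keys b"
      using keys_mult by blast
    have "alpha I \<le> mono_deg x"
      using assms(1) that(1) m(2) by (auto simp: monomial_closed_def intro: alpha_le)
    moreover have "k * alpha I \<le> mono_deg y"
      using Suc.IH that(2) m(3) by blast
    ultimately show "Suc k * alpha I \<le> mono_deg m"
      by (simp add: m(1) mono_deg_add)
  qed
  then have "ideal_pow I (Suc k) \<subseteq> {f. \<forall>m\<in>Poly_Mapping.keys f. Suc k * alpha I \<le> mono_deg m}"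
    unfolding ideal_pow.simps by (intro ideal_gen_least is_ideal_keys_deg_ge) blast
  then show ?case
    using Suc.prems by blast
qed

lemma alpha_attained:
  assumes "is_ideal I" and "monomial_closed I" and "I \<noteq> {0}"
  shows "\<exists>\<gamma>. monomial_poly \<gamma> \<in> I \<and> mono_deg \<gamma> = alpha I"
proof -
  obtain f where "f \<in> I" "f \<noteq> 0"
    using assms(1,3) unfolding is_ideal_def by blast
  then obtain a where "monomial_poly a \<in> I"
    using assms(2) unfolding monomial_closed_def by (metis all_not_in_conv keys_eq_empty)
  then have "\<exists>d f. f \<in> I \<and> f \<noteq> 0 \<and> homogeneous d f"
    using monomial_poly_nonzero homogeneous_monomial_poly by blast
  then have "\<exists>f. f \<in> I \<and> f \<noteq> 0 \<and> homogeneous (alpha I) f"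
    unfolding alpha_def by (rule LeastI_ex)
  then obtain f0 \<gamma> where "f0 \<in> I" "homogeneous (alpha I) f0" "\<gamma> \<in> Poly_Mapping.keys f0"
    by (metis all_not_in_conv keys_eq_empty)
  then show ?thesis
    using assms(2) unfolding monomial_closed_def homogeneous_def by blast
qed

lemma mono_deg_pos_of_mem_proper:
  assumes "is_ideal I" and "I \<noteq> UNIV" and "monomial_poly a \<in> I"
  shows "0 < mono_deg a"
proof (rule ccontr)
  assume "\<not> 0 < mono_deg a"
  then have "1 \<in> I"
    using assms(3) by (simp add: mono_deg_eq_0_iff monomial_poly_0)
  then have "r \<in> I" for r
    using assms(1) unfolding is_ideal_def by (metis mult.right_neutral)
  then show False
    using assms(2) by blast
qed

lemma ex_inj_additive_into_nat_monomials:
  "\<exists>\<kappa> :: ('n::finite \<Rightarrow>\<^sub>0 nat) \<Rightarrow> (nat \<Rightarrow>\<^sub>0 nat). inj \<kappa> \<and> (\<forall>x y. \<kappa> (x + y) = \<kappa> x + \<kappa> y)"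
proof -
  obtain \<iota> :: "'n \<Rightarrow> nat" where \<iota>: "inj \<iota>"
    using finite_imp_inj_to_nat_seg[of "UNIV :: 'n set"] by auto
  define \<kappa> :: "('n \<Rightarrow>\<^sub>0 nat) \<Rightarrow> (nat \<Rightarrow>\<^sub>0 nat)" where
    "\<kappa> m = (\<Sum>i\<in>UNIV. Poly_Mapping.single (\<iota> i) (Poly_Mapping.lookup m i))" for m
  have "Poly_Mapping.lookup (\<kappa> m) (\<iota> i) = Poly_Mapping.lookup m i" for m i
  proof -
    have "Poly_Mapping.lookup (\<kappa> m) (\<iota> i) = (\<Sum>j\<in>UNIV. if j = i then Poly_Mapping.lookup m i else 0)"
      unfolding \<kappa>_def lookup_sum
      by (rule sum.cong) (auto simp: lookup_single when_def inj_eq[OF \<iota>])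
    then show ?thesis by simp
  qed
  then have "inj \<kappa>"
    by (metis injI poly_mapping_eqI)
  moreover have "\<kappa> (x + y) = \<kappa> x + \<kappa> y" for x y
    unfolding \<kappa>_def by (simp add: lookup_add single_add sum.distrib)
  ultimately show ?thesis by blast
qed

text \<open>Leading term argument for a total order compatible with addition: the sum of the largest
  \<open>Z\<close>-monomials of \<open>a\<close> and \<open>b\<close> arises in only one way as a sum of monomials of \<open>a\<close>
  and \<open>b\<close>, so it survives in \<open>a * b\<close>.\<close>
lemma keys_mult_face:
  fixes a b :: "('n::finite \<Rightarrow>\<^sub>0 nat) \<Rightarrow>\<^sub>0 'r::semiring_no_zero_divisors"
  assumes face: "\<And>l q. Z (l + q) \<longleftrightarrow> Z l \<and> Z q"
    and "\<exists>l\<in>Poly_Mapping.keys a. Z l" and "\<exists>q\<in>Poly_Mapping.keys b. Z q"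
  shows "\<exists>m\<in>Poly_Mapping.keys (a * b). Z m"
proof -
  obtain \<kappa> :: "('n \<Rightarrow>\<^sub>0 nat) \<Rightarrow> (nat \<Rightarrow>\<^sub>0 nat)" where \<kappa>: "inj \<kappa>" "\<And>x y. \<kappa> (x + y) = \<kappa> x + \<kappa> y"
    using ex_inj_additive_into_nat_monomials by blast
  define F where "F = {l\<in>Poly_Mapping.keys a. Z l}"
  define G where "G = {q\<in>Poly_Mapping.keys b. Z q}"
  have "finite F" "F \<noteq> {}" "finite G" "G \<noteq> {}"
    using assms(2,3) by (auto simp: F_def G_def)
  have "Max (\<kappa> ` F) \<in> \<kappa> ` F"
    using \<open>finite F\<close> \<open>F \<noteq> {}\<close> by simp
  then obtain a0 where "a0 \<in> F" "\<kappa> a0 = Max (\<kappa> ` F)"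
    by (metis imageE)
  have "Max (\<kappa> ` G) \<in> \<kappa> ` G"
    using \<open>finite G\<close> \<open>G \<noteq> {}\<close> by simp
  then obtain b0 where "b0 \<in> G" "\<kappa> b0 = Max (\<kappa> ` G)"
    by (metis imageE)
  have max_a0: "\<kappa> l \<le> \<kappa> a0" if "l \<in> F" for l
    using that \<open>finite F\<close> \<open>\<kappa> a0 = Max (\<kappa> ` F)\<close> by simp
  have max_b0: "\<kappa> q \<le> \<kappa> b0" if "q \<in> G" for q
    using that \<open>finite G\<close> \<open>\<kappa> b0 = Max (\<kappa> ` G)\<close> by simp
  have "l = a0" if "l \<in> Poly_Mapping.keys a" "q \<in> Poly_Mapping.keys b" "l + q = a0 + b0" for l q
  proof -
    have "Z (l + q)"
      using face \<open>a0 \<in> F\<close> \<open>b0 \<in> G\<close> that(3) by (simp add: F_def G_def)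
    with face that(1,2) have "l \<in> F" "q \<in> G"
      by (simp_all add: F_def G_def)
    then have le: "\<kappa> l \<le> \<kappa> a0" "\<kappa> q \<le> \<kappa> b0"
      by (simp_all add: max_a0 max_b0)
    have sum: "\<kappa> l + \<kappa> q = \<kappa> a0 + \<kappa> b0"
      by (metis that(3) \<kappa>(2))
    have "\<kappa> l = \<kappa> a0"
    proof (rule ccontr)
      assume "\<kappa> l \<noteq> \<kappa> a0"
      with le have "\<kappa> l + \<kappa> q < \<kappa> a0 + \<kappa> b0"
        by (intro add_less_le_mono) simp_all
      with sum show False by simp
    qed
    then show ?thesis
      by (rule injD[OF \<kappa>(1)])
  qed
  then have "Poly_Mapping.lookup (a * b) (a0 + b0) = Poly_Mapping.lookup a a0 * Poly_Mapping.lookup b b0"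
    by (rule lookup_mult_unique_split)
  also have "\<dots> \<noteq> 0"
    using \<open>a0 \<in> F\<close> \<open>b0 \<in> G\<close> by (simp add: F_def G_def in_keys_iff)
  finally have "a0 + b0 \<in> Poly_Mapping.keys (a * b)"
    by (simp add: in_keys_iff)
  moreover have "Z (a0 + b0)"
    using face \<open>a0 \<in> F\<close> \<open>b0 \<in> G\<close> by (simp add: F_def G_def)
  ultimately show ?thesis ..
qed

definition involves_var :: "'n set \<Rightarrow> ('n \<Rightarrow>\<^sub>0 nat) \<Rightarrow> bool" where
  "involves_var A u \<longleftrightarrow> (\<exists>i\<in>A. 0 < Poly_Mapping.lookup u i)"

definition var_ideal :: "'n set \<Rightarrow> ('n::finite, 'a::field) mpoly set" where
  "var_ideal A = {f. \<forall>m\<in>Poly_Mapping.keys f. involves_var A m}"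

lemma involves_var_single: "involves_var A (Poly_Mapping.single i k) \<longleftrightarrow> i \<in> A \<and> 0 < k"
  by (auto simp: involves_var_def lookup_single when_def)

lemma involves_var_add: "involves_var A (u + w) \<longleftrightarrow> involves_var A u \<or> involves_var A w"
  by (auto simp: involves_var_def lookup_add)

lemma prime_ideal_var_ideal: "prime_ideal (var_ideal A)"
  unfolding prime_ideal_def
proof (intro conjI allI impI)
  show "is_ideal (var_ideal A)"
    unfolding is_ideal_def
  proof (intro conjI ballI allI)
    show "0 \<in> var_ideal A" by (simp add: var_ideal_def)
    show "a + b \<in> var_ideal A" if "a \<in> var_ideal A" "b \<in> var_ideal A" for a b
      using that keys_add[of a b] by (auto simp: var_ideal_def)
    show "r * a \<in> var_ideal A" if "a \<in> var_ideal A" for a r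
      using that keys_mult[of r a] by (auto simp: var_ideal_def involves_var_add)
  qed
  have "1 \<notin> var_ideal A"
    by (simp add: var_ideal_def involves_var_def)
  then show "var_ideal A \<noteq> UNIV"
    by blast
  show "a \<in> var_ideal A \<or> b \<in> var_ideal A" if "a * b \<in> var_ideal A" for a b
    using that keys_mult_face[of "\<lambda>m. \<not> involves_var A m" a b]
    by (auto simp: var_ideal_def involves_var_add)
qed

text \<open>If \<open>u\<close> avoided these variables, write \<open>u = e\<^sub>j + u'\<close>: either \<open>u' + h \<in> L\<close>,
  contradicting the induction hypothesis, or \<open>u' + h \<notin> L\<close> while \<open>e\<^sub>i + u' + h \<in> L\<close>
  for \<open>i = j\<close> and for every \<open>i\<close> with \<open>e\<^sub>i + h \<in> L\<close>, contradicting the maximality of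
  \<open>h\<close>.\<close>
lemma involves_var_of_maximal_outside_upset:
  fixes L :: "('n::finite \<Rightarrow>\<^sub>0 nat) set"
  assumes up: "\<And>u w. u \<in> L \<Longrightarrow> u + w \<in> L"
    and "h \<notin> L"
    and maximal: "\<And>y. y \<notin> L \<Longrightarrow>
      card {i. Poly_Mapping.single i 1 + y \<in> L} \<le> card {i. Poly_Mapping.single i 1 + h \<in> L}"
    and "u + h \<in> L"
  shows "involves_var {i. Poly_Mapping.single i 1 + h \<in> L} u"
  using assms(4)
proof (induction u rule: measure_induct_rule[where f = mono_deg])
  case (less u)
  define V where "V = {i. Poly_Mapping.single i 1 + h \<in> L}"
  show ?case
  proof (rule ccontr)
    assume avoids: "\<not> involves_var {i. Poly_Mapping.single i 1 + h \<in> L} u"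
    have "u \<noteq> 0"
      using less.prems \<open>h \<notin> L\<close> by auto
    then obtain j where "j \<in> Poly_Mapping.keys u"
      using keys_eq_empty[of u] by blast
    then have "0 < Poly_Mapping.lookup u j"
      by (simp add: in_keys_iff gr0I)
    then obtain u' where u: "u = Poly_Mapping.single j 1 + u'"
      by (rule split_off_variable[THEN that])
    have "j \<notin> V"
      using avoids \<open>0 < Poly_Mapping.lookup u j\<close> by (auto simp: V_def involves_var_def)
    show False
    proof (cases "u' + h \<in> L")
      case True
      have "mono_deg u' < mono_deg u"
        by (simp add: u mono_deg_add mono_deg_single)
      then have "involves_var V u'"
        using True unfolding V_def by (rule less.IH)
      with avoids show False
        by (simp add: u V_def involves_var_add)
    next
      case False
      have "insert j V \<subseteq> {i. Poly_Mapping.single i 1 + (u' + h) \<in> L}"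
      proof (intro subsetI CollectI)
        fix i assume "i \<in> insert j V"
        then show "Poly_Mapping.single i 1 + (u' + h) \<in> L"
        proof
          assume "i = j"
          with less.prems show ?thesis by (simp add: u add.assoc)
        next
          assume "i \<in> V"
          then show ?thesis
            using up[of "Poly_Mapping.single i 1 + h" u'] by (simp add: V_def add_ac)
        qed
      qed
      then have "card (insert j V) \<le> card {i. Poly_Mapping.single i 1 + (u' + h) \<in> L}"
        by (intro card_mono) simp_all
      with maximal[OF False] \<open>j \<notin> V\<close> show False
        by (simp add: V_def)
    qed
  qed
qed

lemma upset_ex_colon_eq_involves_var:
  fixes L :: "('n::finite \<Rightarrow>\<^sub>0 nat) set"
  assumes up: "\<And>u w. u \<in> L \<Longrightarrow> u + w \<in> L" and "0 \<notin> L"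
  shows "\<exists>h A. h \<notin> L \<and> (\<forall>u. u + h \<in> L \<longleftrightarrow> involves_var A u)"
proof -
  define V where "V y = {i. Poly_Mapping.single i 1 + y \<in> L}" for y
  have "card (V y) < card (UNIV :: 'n set) + 1" for y
    using card_mono[of UNIV "V y"] by simp
  then obtain h where "h \<notin> L" and maximal: "\<And>y. y \<notin> L \<Longrightarrow> card (V y) \<le> card (V h)"
    using ex_has_greatest_nat[of "\<lambda>y. y \<notin> L" 0 "\<lambda>y. card (V y)" "card (UNIV :: 'n set) + 1"] \<open>0 \<notin> L\<close>
    by blast
  have "u + h \<in> L \<longleftrightarrow> involves_var (V h) u" for u
  proof
    show "u + h \<in> L \<Longrightarrow> involves_var (V h) u"
      unfolding V_def by (rule involves_var_of_maximal_outside_upset[OF up \<open>h \<notin> L\<close> maximal[unfolded V_def]])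
    show "u + h \<in> L" if "involves_var (V h) u"
    proof -
      obtain i where "i \<in> V h" "0 < Poly_Mapping.lookup u i"
        using \<open>involves_var (V h) u\<close> by (auto simp: involves_var_def)
      from \<open>0 < Poly_Mapping.lookup u i\<close> obtain w where "u = Poly_Mapping.single i 1 + w"
        by (rule split_off_variable[THEN that])
      with \<open>i \<in> V h\<close> show ?thesis
        using up[of "Poly_Mapping.single i 1 + h" w] by (simp add: V_def add_ac)
    qed
  qed
  with \<open>h \<notin> L\<close> show ?thesis
    by blast
qed

lemma monomial_level_mono:
  assumes "monomial_poly \<gamma> \<in> I" and "n \<le> m"
    and "monomial_poly (u + (\<Sum>k<n. \<gamma>)) \<in> ideal_pow I (Suc n)"
  shows "monomial_poly (u + (\<Sum>k<m. \<gamma>)) \<in> ideal_pow I (Suc m)"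
  using assms(2,3)
proof (induction m rule: dec_induct)
  case base
  then show ?case by simp
next
  case (step m)
  have "monomial_poly \<gamma> * monomial_poly (u + (\<Sum>k<m. \<gamma>)) \<in> ideal_pow I (Suc (Suc m))"
    using assms(1) step.IH[OF step.prems] by (rule mult_mem_ideal_pow_Suc)
  then show ?case
    by (simp add: monomial_poly_mult add_ac)
qed

lemma eventually_colon_ideal_pow_eq_var_ideal:
  fixes I :: "('n::finite, 'a::field) mpoly set"
  assumes "monomial_closed I" and \<gamma>: "monomial_poly \<gamma> \<in> I"
    and not_mem: "\<And>n. monomial_poly (\<Sum>k<n. \<gamma>) \<notin> ideal_pow I (Suc n)"
  shows "\<exists>h A N. \<forall>n\<ge>N. colon (ideal_pow I (Suc n)) (monomial_poly (h + (\<Sum>k<n. \<gamma>))) = var_ideal A"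
proof -
  define L where "L = {u. \<exists>n. monomial_poly (u + (\<Sum>k<n. \<gamma>)) \<in> ideal_pow I (Suc n)}"
  have "u + w \<in> L" if "u \<in> L" for u w
  proof -
    obtain n where "monomial_poly (u + (\<Sum>k<n. \<gamma>)) \<in> ideal_pow I (Suc n)"
      using \<open>u \<in> L\<close> by (auto simp: L_def)
    then have "monomial_poly w * monomial_poly (u + (\<Sum>k<n. \<gamma>)) \<in> ideal_pow I (Suc n)"
      using is_ideal_ideal_pow unfolding is_ideal_def by blast
    then show ?thesis
      unfolding L_def by (auto simp: monomial_poly_mult add_ac)
  qed
  moreover have "0 \<notin> L"
    using not_mem by (simp add: L_def)
  ultimately obtain h A where hA: "\<And>u. u + h \<in> L \<longleftrightarrow> involves_var A u"
    using upset_ex_colon_eq_involves_var by blast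
  have "Poly_Mapping.single i 1 + h \<in> L" if "i \<in> A" for i
    using hA[of "Poly_Mapping.single i 1"] that by (simp add: involves_var_single)
  then have "\<forall>i\<in>A. \<exists>n. monomial_poly (Poly_Mapping.single i 1 + h + (\<Sum>k<n. \<gamma>)) \<in> ideal_pow I (Suc n)"
    by (simp add: L_def)
  then obtain level where level:
    "\<And>i. i \<in> A \<Longrightarrow> monomial_poly (Poly_Mapping.single i 1 + h + (\<Sum>k<level i. \<gamma>)) \<in> ideal_pow I (Suc (level i))"
    by metis
  define N where "N = Max (level ` A)"
  have mem_iff: "monomial_poly (u + h + (\<Sum>k<n. \<gamma>)) \<in> ideal_pow I (Suc n) \<longleftrightarrow> involves_var A u"
    if "N \<le> n" for u n
  proof
    assume "monomial_poly (u + h + (\<Sum>k<n. \<gamma>)) \<in> ideal_pow I (Suc n)"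
    then show "involves_var A u"
      using hA by (auto simp: L_def)
  next
    assume "involves_var A u"
    then obtain i where "i \<in> A" "0 < Poly_Mapping.lookup u i"
      by (auto simp: involves_var_def)
    from \<open>0 < Poly_Mapping.lookup u i\<close> obtain w where u: "u = Poly_Mapping.single i 1 + w"
      by (rule split_off_variable[THEN that])
    have "level i \<le> N"
      unfolding N_def by (rule Max_ge) (simp_all add: \<open>i \<in> A\<close>)
    with \<open>N \<le> n\<close> have "level i \<le> n"
      by simp
    then have "monomial_poly (Poly_Mapping.single i 1 + h + (\<Sum>k<n. \<gamma>)) \<in> ideal_pow I (Suc n)"
      by (rule monomial_level_mono[OF \<gamma> _ level[OF \<open>i \<in> A\<close>]])
    then have "monomial_poly w * monomial_poly (Poly_Mapping.single i 1 + h + (\<Sum>k<n. \<gamma>)) \<in> ideal_pow I (Suc n)"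
      using is_ideal_ideal_pow unfolding is_ideal_def by blast
    then show "monomial_poly (u + h + (\<Sum>k<n. \<gamma>)) \<in> ideal_pow I (Suc n)"
      by (simp add: u monomial_poly_mult add_ac)
  qed
  have "colon (ideal_pow I (Suc n)) (monomial_poly (h + (\<Sum>k<n. \<gamma>))) = var_ideal A" if "N \<le> n" for n
  proof (intro set_eqI)
    fix q
    have "q \<in> colon (ideal_pow I (Suc n)) (monomial_poly (h + (\<Sum>k<n. \<gamma>))) \<longleftrightarrow>
        (\<forall>m\<in>Poly_Mapping.keys q. monomial_poly (m + (h + (\<Sum>k<n. \<gamma>))) \<in> ideal_pow I (Suc n))"
      unfolding colon_def mem_Collect_eq
      by (rule mult_monomial_mem_iff[OF is_ideal_ideal_pow monomial_closed_ideal_pow[OF assms(1)]])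
    also have "\<dots> \<longleftrightarrow> q \<in> var_ideal A"
      by (simp only: var_ideal_def mem_Collect_eq add.assoc[symmetric] mem_iff[OF that])
    finally show "q \<in> colon (ideal_pow I (Suc n)) (monomial_poly (h + (\<Sum>k<n. \<gamma>))) \<longleftrightarrow> q \<in> var_ideal A" .
  qed
  then show ?thesis
    by blast
qed

lemma v_number_le_of_colon_eq_var_ideal:
  assumes "colon J (monomial_poly c) = var_ideal A"
  shows "v_number J \<le> mono_deg c"
proof -
  have "var_ideal A \<in> Ass J"
    using assms prime_ideal_var_ideal unfolding Ass_def by auto
  then show ?thesis
    unfolding v_number_def using assms homogeneous_monomial_poly by (blast intro: Least_le)
qed

lemma monomial_multiple_not_mem_ideal_pow:
  assumes "monomial_closed I" and "mono_deg \<gamma> = alpha I" and "0 < alpha I"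
  shows "monomial_poly (\<Sum>k<n. \<gamma>) \<notin> ideal_pow I (Suc n)"
proof
  assume "monomial_poly (\<Sum>k<n. \<gamma>) \<in> ideal_pow I (Suc n)"
  then have "Suc n * alpha I \<le> n * alpha I"
    using mono_deg_ge_of_mem_ideal_pow[OF assms(1)] assms(2) by (fastforce simp: mono_deg_sum)
  with assms(3) show False
    by simp
qed

theorem theorem4p7:
  fixes I :: "('n::finite, 'a::field) mpoly set"
  assumes "monomial_ideal I" and "I \<noteq> {0}" and "I \<noteq> UNIV"
  shows "\<exists>n0 d::nat. n0 > 0 \<and> d > 0 \<and>
           (\<forall>n\<ge>n0. v_number (ideal_pow I (n + 1)) \<le> n * alpha I + d)"
proof -
  have ideal: "is_ideal I" and closed: "monomial_closed I"
    using assms(1) by (rule is_ideal_monomial_ideal, rule monomial_closed_monomial_ideal)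
  obtain \<gamma> where \<gamma>: "monomial_poly \<gamma> \<in> I" "mono_deg \<gamma> = alpha I"
    using alpha_attained[OF ideal closed assms(2)] by blast
  have "0 < alpha I"
    using mono_deg_pos_of_mem_proper[OF ideal assms(3) \<gamma>(1)] \<gamma>(2) by simp
  then obtain h A N where colon:
    "\<And>n. N \<le> n \<Longrightarrow> colon (ideal_pow I (Suc n)) (monomial_poly (h + (\<Sum>k<n. \<gamma>))) = var_ideal A"
    using eventually_colon_ideal_pow_eq_var_ideal[OF closed \<gamma>(1)]
      monomial_multiple_not_mem_ideal_pow[OF closed \<gamma>(2)] by blast
  have "v_number (ideal_pow I (n + 1)) \<le> n * alpha I + Suc (mono_deg h)" if "Suc N \<le> n" for n
  proof -
    have "v_number (ideal_pow I (Suc n)) \<le> mono_deg (h + (\<Sum>k<n. \<gamma>))"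
      using colon that by (simp add: v_number_le_of_colon_eq_var_ideal)
    also have "\<dots> = n * alpha I + mono_deg h"
      by (simp add: mono_deg_add mono_deg_sum \<gamma>(2))
    finally show ?thesis
      by simp
  qed
  then show ?thesis
    by blast
qed

end
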